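(* Let $g>0$, let $\hat\nu:\mathbb R\to[\nu_0,\nu_1]$ be a stretch-limiting constitutive function as in the context, and let $a>0$, $b\in\mathbb R$ with $a^2+b^2<\nu_0^2$. Let $\gamma_n>0$ with $\gamma_n\to0$, and for each $n$ let $\lambda_n<0$, $\mu_n\in\mathbb R$ satisfy $$a\mathbf i+b\mathbf k=\int_0^1\frac{\hat\nu(-\delta_n(s))}{-\delta_n(s)}\big(\lambda_n\mathbf i+(\mu_n+g\gamma_n s)\mathbf k\big)\,ds,\qquad \delta_n(s)=\sqrt{\lambda_n^2+(\mu_n+g\gamma_n s)^2}.$$ Then $\lim_{n\to\infty}\sqrt{\lambda_n^2+\mu_n^2}=0$.
   Context: Stretch-limited constitutive function: constants $N_0<0<N_1$, $0<\nu_0<1<\nu_1$ with $\hat\nu(N)=\nu_0$ for $N\le N_0$, $\hat\nu(N)=\nu_1$ for $N\ge N_1$, $\hat\nu\in C^\infty([N_0,N_1];[\nu_0,\nu_1])$, $\hat\nu(0)=1$, $\hat\nu'\ge c>0$ on $[N_0,N_1]$. The equation describes a compressive uniform catenary with mass $\gamma_n$ per unit reference length and supports at $\mathbf 0$ and $a\mathbf i+b\mathbf k$. *)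

theory Defs
  imports "HOL-Analysis.Analysis"
begin

definition smooth_on_interval :: "(real \<Rightarrow> real) \<Rightarrow> real \<Rightarrow> real \<Rightarrow> (nat \<Rightarrow> real \<Rightarrow> real) \<Rightarrow> bool" where
  "smooth_on_interval f a b D \<longleftrightarrow>
     (\<forall>x\<in>{a..b}. D 0 x = f x) \<and>
     (\<forall>k. \<forall>x\<in>{a..b}. (D k has_real_derivative D (Suc k) x) (at x within {a..b}))"

definition stretch_limiting ::
  "(real \<Rightarrow> real) \<Rightarrow> real \<Rightarrow> real \<Rightarrow> real \<Rightarrow> real \<Rightarrow> bool" where
  "stretch_limiting nu N0 N1 nu0 nu1 \<longleftrightarrow>
     N0 < 0 \<and> 0 < N1 \<and> 0 < nu0 \<and> nu0 < 1 \<and> 1 < nu1 \<and>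
     (\<forall>N\<le>N0. nu N = nu0) \<and> (\<forall>N\<ge>N1. nu N = nu1) \<and>
     (\<forall>N\<in>{N0..N1}. nu N \<in> {nu0..nu1}) \<and>
     nu 0 = 1 \<and>
     (\<exists>D c. smooth_on_interval nu N0 N1 D \<and> c > 0 \<and> (\<forall>N\<in>{N0..N1}. D 1 N \<ge> c))"

end

theory Submission
  imports Defs
begin

text \<open>Project the vector equation onto the unit vector \<open>-(\<lambda>\<^sub>n, \<mu>\<^sub>n)/r\<^sub>n\<close>, where
  \<open>r\<^sub>n = |(\<lambda>\<^sub>n, \<mu>\<^sub>n)|\<close> and \<open>h\<^sub>n = g \<gamma>\<^sub>n\<close>. By Cauchy-Schwarz the left-hand side is at most
  \<open>A = |(a, b)| < \<nu>\<^sub>0\<close>. On the right the integrand is \<open>\<nu>/\<delta>\<close> times the inner product of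
  \<open>(\<lambda>\<^sub>n, \<mu>\<^sub>n + h\<^sub>n s)\<close> with \<open>(\<lambda>\<^sub>n, \<mu>\<^sub>n)/r\<^sub>n\<close>; since the two vectors differ by at most \<open>h\<^sub>n\<close>,
  it is at least \<open>\<nu>\<^sub>0 (r\<^sub>n - h\<^sub>n)/(r\<^sub>n + h\<^sub>n)\<close> whenever \<open>r\<^sub>n > h\<^sub>n\<close>. Hence
  \<open>r\<^sub>n (\<nu>\<^sub>0 - A) \<le> h\<^sub>n (\<nu>\<^sub>0 + A)\<close>, and \<open>r\<^sub>n = O(\<gamma>\<^sub>n) \<rightarrow> 0\<close>.\<close>

lemma stretch_limiting_ge_nu0:
  assumes "stretch_limiting nu N0 N1 nu0 nu1"
  shows "nu0 \<le> nu N"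
proof -
  consider "N \<le> N0" | "N1 \<le> N" | "N \<in> {N0..N1}" by force
  then show ?thesis
    using assms unfolding stretch_limiting_def by cases auto
qed

lemma inner_add_left_ge_norm:
  fixes v w :: "'a::real_inner"
  assumes "norm w \<le> h"
  shows "norm v * (norm v - h) \<le> inner (v + w) v"
proof -
  have "- (norm w * norm v) \<le> inner w v"
    using Cauchy_Schwarz_ineq2[of w v] by linarith
  moreover have "norm w * norm v \<le> h * norm v"
    using assms by (simp add: mult_right_mono)
  ultimately show ?thesis
    by (simp add: inner_add_left algebra_simps flip: power2_norm_eq_inner power2_eq_square)
qed

lemma scaled_inner_perturbed_ge:
  fixes v w :: "'a::real_inner"
  assumes w: "norm w \<le> h" and h: "h < norm v" and c: "0 < c0" "c0 \<le> c"
  shows "c0 * norm v * (norm v - h) / (norm v + h) \<le> c / norm (v + w) * inner (v + w) v"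
proof -
  define r d where "r = norm v" and "d = norm (v + w)"
  have "r - h \<le> d"
    using norm_triangle_ineq4[of "v + w" w] w unfolding r_def d_def by simp
  then have d_pos: "0 < d"
    using h unfolding r_def by linarith
  have d_le: "d \<le> r + h"
    using norm_triangle_ineq[of v w] w unfolding r_def d_def by linarith
  have X: "r * (r - h) \<le> inner (v + w) v"
    using inner_add_left_ge_norm[OF w] unfolding r_def .
  have rh_pos: "0 < r * (r - h)"
    using h norm_ge_zero[of w] w unfolding r_def by (intro mult_pos_pos) linarith+
  have "c0 * r * (r - h) / (r + h) = c0 * (r * (r - h)) / (r + h)"
    by simp
  also have "\<dots> \<le> c0 * (r * (r - h)) / d"
    using c rh_pos d_pos d_le by (intro divide_left_mono) auto
  also have "\<dots> \<le> c * inner (v + w) v / d"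
    using c rh_pos X d_pos by (intro divide_right_mono mult_mono) auto
  finally show ?thesis
    unfolding r_def d_def by simp
qed

lemma norm_bound_from_projected_integral:
  fixes v :: "'a::real_inner" and w :: "real \<Rightarrow> 'a"
  assumes w: "\<And>s. s \<in> {0..1} \<Longrightarrow> norm (w s) \<le> h"
    and c: "0 < c0" "\<And>s. s \<in> {0..1} \<Longrightarrow> c0 \<le> c s"
    and A: "0 \<le> A" "A < c0"
    and I: "((\<lambda>s. c s / norm (v + w s) * inner (v + w s) v) has_integral I) {0..1}"
    and I_le: "I \<le> A * norm v"
  shows "norm v * (c0 - A) \<le> h * (c0 + A)"
proof -
  have h: "0 \<le> h"
    by (rule order_trans[OF norm_ge_zero w[of 0]]) simp
  show ?thesis
  proof (cases "h < norm v")
    case False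
    then show ?thesis
      using A h by (intro mult_mono) auto
  next
    case True
    define r where "r = norm v"
    define K where "K = c0 * r * (r - h) / (r + h)"
    have r: "0 < r" "0 < r + h"
      using True h unfolding r_def by linarith+
    have "K \<le> I"
    proof (rule has_integral_le[OF _ I])
      show "((\<lambda>s::real. K) has_integral K) {0..1}"
        using has_integral_const_real[of K 0 1] by simp
      fix s :: real
      assume "s \<in> {0..1}"
      then show "K \<le> c s / norm (v + w s) * inner (v + w s) v"
        unfolding K_def r_def using w c True by (intro scaled_inner_perturbed_ge) auto
    qed
    with I_le have "c0 * r * (r - h) / (r + h) \<le> A * r"
      unfolding K_def r_def by linarith
    then have "r * (c0 * (r - h)) \<le> r * (A * (r + h))"
      using r by (simp add: pos_divide_le_eq algebra_simps)
    then have "c0 * (r - h) \<le> A * (r + h)"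
      using r(1) by (rule mult_left_le_imp_le)
    then show ?thesis
      unfolding r_def by (simp add: algebra_simps)
  qed
qed

lemma catenary_radius_bound:
  fixes l m h p q c0 :: real and c :: "real \<Rightarrow> real"
  defines "d \<equiv> \<lambda>s. sqrt (l\<^sup>2 + (m + h * s)\<^sup>2)"
  assumes h: "0 \<le> h"
    and c: "0 < c0" "\<And>s. s \<in> {0..1} \<Longrightarrow> c0 \<le> c s"
    and pq: "sqrt (p\<^sup>2 + q\<^sup>2) < c0"
    and eq_p: "((\<lambda>s. c s / (- d s) * l) has_integral p) {0..1}"
    and eq_q: "((\<lambda>s. c s / (- d s) * (m + h * s)) has_integral q) {0..1}"
  shows "sqrt (l\<^sup>2 + m\<^sup>2) * (c0 - sqrt (p\<^sup>2 + q\<^sup>2)) \<le> h * (c0 + sqrt (p\<^sup>2 + q\<^sup>2))"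
proof -
  define v w where "v = (l, m)" and "w = (\<lambda>s. (0, h * s) :: real \<times> real)"
  have norm_v: "norm v = sqrt (l\<^sup>2 + m\<^sup>2)" and norm_pq: "norm (p, q) = sqrt (p\<^sup>2 + q\<^sup>2)"
    and d_eq: "d s = norm (v + w s)" for s
    by (simp_all add: v_def w_def d_def norm_Pair)
  have "((\<lambda>s. c s / (- d s) * l * (- l) + c s / (- d s) * (m + h * s) * (- m))
        has_integral inner (p, q) (- v)) {0..1}"
    using has_integral_add[OF has_integral_mult_left[OF eq_p, of "- l"]
        has_integral_mult_left[OF eq_q, of "- m"]]
    by (simp add: v_def)
  then have projected: "((\<lambda>s. c s / norm (v + w s) * inner (v + w s) v)
        has_integral inner (p, q) (- v)) {0..1}"
    by (rule has_integral_eq[rotated]) (simp add: d_eq v_def w_def divide_inverse algebra_simps)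
  have "norm v * (c0 - norm (p, q)) \<le> h * (c0 + norm (p, q))"
  proof (rule norm_bound_from_projected_integral[OF _ c _ _ projected])
    show "norm (w s) \<le> h" if "s \<in> {0..1}" for s
      using that h by (simp add: w_def abs_mult mult_left_le)
    show "0 \<le> norm (p, q)" "norm (p, q) < c0"
      using pq by (simp_all add: norm_pq)
    show "inner (p, q) (- v) \<le> norm (p, q) * norm v"
      using Cauchy_Schwarz_ineq2[of "(p, q)" "- v"] by simp
  qed
  then show ?thesis
    by (simp add: norm_v norm_pq)
qed

theorem lemma4p6:
  fixes g a b N0 N1 nu0 nu1 :: real
    and nu :: "real \<Rightarrow> real"
    and gamma lam mu :: "nat \<Rightarrow> real"
  defines "\<delta> \<equiv> (\<lambda>n s. sqrt ((lam n)\<^sup>2 + (mu n + g * gamma n * s)\<^sup>2))"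
  assumes g: "g > 0"
    and nu: "stretch_limiting nu N0 N1 nu0 nu1"
    and ab: "a > 0" "a\<^sup>2 + b\<^sup>2 < nu0\<^sup>2"
    and gamma_pos: "\<And>n. gamma n > 0"
    and gamma_lim: "gamma \<longlonglongrightarrow> 0"
    and lam_neg: "\<And>n. lam n < 0"
    and eq_i: "\<And>n. ((\<lambda>s. nu (- \<delta> n s) / (- \<delta> n s) * lam n) has_integral a) {0..1}"
    and eq_k: "\<And>n. ((\<lambda>s. nu (- \<delta> n s) / (- \<delta> n s) * (mu n + g * gamma n * s))
                      has_integral b) {0..1}"
  shows "(\<lambda>n. sqrt ((lam n)\<^sup>2 + (mu n)\<^sup>2)) \<longlonglongrightarrow> 0"
proof -
  have nu0_pos: "0 < nu0"
    using nu unfolding stretch_limiting_def by simp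
  define A where "A = sqrt (a\<^sup>2 + b\<^sup>2)"
  have A: "A < nu0"
    using real_sqrt_less_mono[OF ab(2)] nu0_pos by (simp add: A_def)
  have bound: "sqrt ((lam n)\<^sup>2 + (mu n)\<^sup>2) * (nu0 - A) \<le> g * gamma n * (nu0 + A)" for n
    unfolding A_def
  proof (rule catenary_radius_bound[OF _ nu0_pos _ _ eq_i[unfolded \<delta>_def] eq_k[unfolded \<delta>_def]])
    show "0 \<le> g * gamma n"
      using g gamma_pos[of n] by simp
  qed (use A stretch_limiting_ge_nu0[OF nu] in \<open>simp_all add: A_def\<close>)
  define C where "C = g * (nu0 + A) / (nu0 - A)"
  have upper: "sqrt ((lam n)\<^sup>2 + (mu n)\<^sup>2) \<le> C * gamma n" for n
    using bound[of n] A unfolding C_def by (simp add: pos_le_divide_eq mult_ac)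
  have upper_lim: "(\<lambda>n. C * gamma n) \<longlonglongrightarrow> 0"
    using tendsto_mult_right_zero[OF gamma_lim] .
  show ?thesis
    by (rule tendsto_sandwich[OF _ _ tendsto_const upper_lim]) (simp_all add: upper)
qed

end
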